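(* Let $\mathcal{V}$ be a finite-dimensional inner product space with inner product $\langle\cdot,\cdot\rangle$ and distance $d(x,y)=\sqrt{\langle x-y,x-y\rangle}$, let $\mathcal{S}\subseteq\mathcal{V}$ be the state space and $U:\mathcal{S}\to\mathcal{S}$ a map such that $\mathcal{S}$ is bounded (there is $D$ with $d(s,t)<D$ for all $s,t\in\mathcal{S}$) and $\langle U(s),U(t)\rangle=\langle s,t\rangle$ for all $s,t\in\mathcal{S}$. Then the system is uniformly recurrent in metric: for every $\epsilon>0$ there is an integer $n>0$ such that $d(U(n)s,s)<\epsilon$ for all $s\in\mathcal{S}$.
   Context: $U(n)$ denotes the $n$-fold composition of $U$. *)

theory Defs
  imports "HOL-Analysis.Analysis"
begin

end

theory Submission
  imports Defs
begin

text \<open>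
  U preserves distances on S, so every iterate does. Cover S by finitely many \<open>\<epsilon>\<close>-balls with
  centres in a finite set K \<subseteq> S. For each n, record for every x \<in> K a centre \<epsilon>-close to \<open>U\<^sup>n x\<close>;
  there are only finitely many such records, so two times a < b share one. Then every
  \<open>U\<^sup>a x\<close> is 2\<epsilon>-close to \<open>U\<^sup>b x\<close>, i.e. \<open>U\<^sup>b\<^sup>-\<^sup>a\<close> moves each point of K by less than 2\<epsilon>, and
  hence, by isometry, each point of S by less than 4\<epsilon>.
\<close>

lemma dist_eq_if_inner_eq:
  fixes x y x' y' :: "'a::real_inner"
  assumes "inner x' x' = inner x x" "inner y' y' = inner y y" "inner x' y' = inner x y"
  shows "dist x' y' = dist x y"
proof -
  have "(dist x' y')\<^sup>2 = (dist x y)\<^sup>2"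
    using assms
    by (simp add: dist_norm power2_norm_eq_inner inner_diff_left inner_diff_right inner_commute)
  then show ?thesis
    by simp
qed

lemma funpow_mem:
  assumes "f ` S \<subseteq> S" "x \<in> S"
  shows "(f ^^ n) x \<in> S"
  using assms(2) by (induction n) (use assms(1) in auto)

lemma funpow_dist_eq:
  fixes f :: "'a::metric_space \<Rightarrow> 'a"
  assumes "f ` S \<subseteq> S" "\<And>x y. x \<in> S \<Longrightarrow> y \<in> S \<Longrightarrow> dist (f x) (f y) = dist x y"
    and "x \<in> S" "y \<in> S"
  shows "dist ((f ^^ n) x) ((f ^^ n) y) = dist x y"
proof (induction n)
  case (Suc n)
  then show ?case
    using assms funpow_mem[OF assms(1)] by simp
qed simp

lemma finite_net_simultaneous_return:
  fixes g :: "nat \<Rightarrow> 'a::metric_space \<Rightarrow> 'a"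
  assumes "finite K" "\<And>n x. x \<in> K \<Longrightarrow> \<exists>c\<in>K. dist c (g n x) < e"
  obtains a b where "a < b" "\<And>x. x \<in> K \<Longrightarrow> dist (g a x) (g b x) < 2 * e"
proof -
  let ?near = "\<lambda>n \<phi>. \<forall>x\<in>K. dist (\<phi> x) (g n x) < e"
  have near: "\<forall>n\<in>UNIV. \<exists>\<phi>\<in>K \<rightarrow>\<^sub>E K. ?near n \<phi>"
  proof
    fix n
    have "\<forall>x\<in>K. \<exists>c\<in>K. dist c (g n x) < e"
      using assms(2) by blast
    then obtain \<phi> where "\<forall>x\<in>K. \<phi> x \<in> K \<and> dist (\<phi> x) (g n x) < e"
      by metis
    then show "\<exists>\<phi>\<in>K \<rightarrow>\<^sub>E K. ?near n \<phi>"
      by (intro bexI[of _ "restrict \<phi> K"]) simp_all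
  qed
  have "finite (K \<rightarrow>\<^sub>E K)"
    using assms(1) by (simp add: finite_PiE)
  then obtain \<phi> where "infinite {n \<in> UNIV. ?near n \<phi>}"
    using pigeonhole_infinite_rel[OF infinite_UNIV_nat _ near] by blast
  then have unbounded: "\<forall>m. \<exists>n>m. ?near n \<phi>"
    by (simp add: infinite_nat_iff_unbounded)
  then obtain a where a: "?near a \<phi>"
    by blast
  obtain b where "a < b" and b: "?near b \<phi>"
    using unbounded by blast
  show thesis
  proof (rule that[OF \<open>a < b\<close>])
    fix x assume "x \<in> K"
    then have "dist (g a x) (\<phi> x) < e" "dist (\<phi> x) (g b x) < e"
      using a b by (simp_all add: dist_commute)
    then show "dist (g a x) (g b x) < 2 * e"
      using dist_triangle[of "g a x" "g b x" "\<phi> x"] by linarith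
  qed
qed

lemma uniformly_recurrent_if_isometry_totally_bounded:
  fixes f :: "'a::metric_space \<Rightarrow> 'a"
  assumes "f ` S \<subseteq> S" "\<And>x y. x \<in> S \<Longrightarrow> y \<in> S \<Longrightarrow> dist (f x) (f y) = dist x y"
    and "Met_TC.mtotally_bounded S" "\<epsilon> > 0"
  obtains p where "p > 0" "\<And>x. x \<in> S \<Longrightarrow> dist ((f ^^ p) x) x < \<epsilon>"
proof -
  have iso: "dist ((f ^^ n) x) ((f ^^ n) y) = dist x y" if "x \<in> S" "y \<in> S" for n x y
    using funpow_dist_eq[OF assms(1,2) that] .
  define e where "e = \<epsilon> / 4"
  have "e > 0"
    using assms(4) by (simp add: e_def)
  then obtain K where K: "finite K" "K \<subseteq> S" "S \<subseteq> (\<Union>c\<in>K. ball c e)"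
    using assms(3) unfolding Met_TC.mtotally_bounded_def by auto
  have net: "\<exists>c\<in>K. dist c y < e" if "y \<in> S" for y
    using K(3) that by (auto simp: subset_eq)
  obtain a b where "a < b" and ab: "\<And>x. x \<in> K \<Longrightarrow> dist ((f ^^ a) x) ((f ^^ b) x) < 2 * e"
    using finite_net_simultaneous_return[OF K(1), of "\<lambda>n. f ^^ n"]
      net funpow_mem[OF assms(1)] K(2) by blast
  define p where "p = b - a"
  have K_return: "dist ((f ^^ p) x) x < 2 * e" if "x \<in> K" for x
  proof -
    have "x \<in> S" "(f ^^ p) x \<in> S"
      using that K(2) funpow_mem[OF assms(1)] by auto
    moreover have "b = a + p"
      using \<open>a < b\<close> by (simp add: p_def)
    then have "(f ^^ b) x = (f ^^ a) ((f ^^ p) x)"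
      by (simp add: funpow_add)
    ultimately show ?thesis
      using ab[OF that] iso by (simp add: dist_commute)
  qed
  show thesis
  proof (rule that)
    show "p > 0"
      using \<open>a < b\<close> by (simp add: p_def)
  next
    fix x assume "x \<in> S"
    then obtain c where c: "c \<in> K" "dist c x < e"
      using net by blast
    then have "c \<in> S"
      using K(2) by auto
    have "dist ((f ^^ p) x) x \<le> dist ((f ^^ p) x) ((f ^^ p) c) + dist ((f ^^ p) c) c + dist c x"
      using dist_triangle[of "(f ^^ p) x" x "(f ^^ p) c"] dist_triangle[of "(f ^^ p) c" x c]
      by linarith
    also have "\<dots> < e + 2 * e + e"
      using iso[OF \<open>x \<in> S\<close> \<open>c \<in> S\<close>] K_return[OF c(1)] c(2) by (simp add: dist_commute)
    finally show "dist ((f ^^ p) x) x < \<epsilon>"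
      by (simp add: e_def)
  qed
qed

lemma bounded_if_dist_bounded:
  assumes "\<forall>s\<in>S. \<forall>t\<in>S. dist s t < D"
  shows "bounded S"
  using assms unfolding bounded_def by (metis less_imp_le)

theorem theorem6:
  fixes S :: "'a::euclidean_space set" and U :: "'a \<Rightarrow> 'a"
  assumes "U ` S \<subseteq> S"
    and "\<exists>D. \<forall>s\<in>S. \<forall>t\<in>S. dist s t < D"
    and "\<forall>s\<in>S. \<forall>t\<in>S. inner (U s) (U t) = inner s t"
  shows "\<forall>\<epsilon>>0. \<exists>n::nat. n > 0 \<and> (\<forall>s\<in>S. dist ((U ^^ n) s) s < \<epsilon>)"
proof (intro allI impI)
  fix \<epsilon> :: real assume "\<epsilon> > 0"
  have iso: "dist (U s) (U t) = dist s t" if "s \<in> S" "t \<in> S" for s t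
    using assms(3) that by (intro dist_eq_if_inner_eq) auto
  have "bounded S"
    using assms(2) bounded_if_dist_bounded by blast
  then have "Met_TC.mtotally_bounded S"
    by (simp add: Met_TC.compact_closure_of_imp_mtotally_bounded)
  then obtain n where "n > 0" "\<And>s. s \<in> S \<Longrightarrow> dist ((U ^^ n) s) s < \<epsilon>"
    using uniformly_recurrent_if_isometry_totally_bounded[OF assms(1) iso _ \<open>\<epsilon> > 0\<close>] by blast
  then show "\<exists>n. n > 0 \<and> (\<forall>s\<in>S. dist ((U ^^ n) s) s < \<epsilon>)"
    by blast
qed

end
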